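(* Let $m\ge 38$ be even and let $G$ be a graph with maximum spectral radius among all $H(4,3)$-free graphs with $m$ edges and no isolated vertices. Let $\mathbf{x}$ be the Perron vector of $G$, $u^*$ a vertex maximizing $x_{u^*}$, $N = N(u^* )$, and $A_+ = \{v\in N : d_N(v)\ge 1\}$. Then $G[A_+]$ is isomorphic to a star $K_{1,t}$ for some $t\ge 1$.
   Context: All graphs are simple and undirected; $\rho(G)$ is the largest adjacency eigenvalue and the Perron vector is the positive unit eigenvector for $\rho(G)$ (the extremal $G$ is connected). $H(4,3)$ is the graph formed by a cycle of length $4$ and a triangle sharing exactly one common vertex. $N(v)$ denotes the neighbourhood of $v$, $d_S(v)=|N(v)\cap S|$, and $G[S]$ is the subgraph induced by $S$. *)

theory Defs
  imports Complex_Main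
begin

text \<open>A simple graph without isolated vertices is represented by its finite edge set
  E, each edge being a 2-element set of vertices; the vertex set is the union of E.\<close>

definition simple_graph :: "'a set set \<Rightarrow> bool" where
  "simple_graph E \<longleftrightarrow> finite E \<and> (\<forall>e\<in>E. card e = 2)"

definition verts :: "'a set set \<Rightarrow> 'a set" where
  "verts E = \<Union>E"

definition adj :: "'a set set \<Rightarrow> 'a \<Rightarrow> 'a \<Rightarrow> real" where
  "adj E v w = (if {v, w} \<in> E then 1 else 0)"

definition is_adj_eigenvector :: "'a set set \<Rightarrow> real \<Rightarrow> ('a \<Rightarrow> real) \<Rightarrow> bool" where
  "is_adj_eigenvector E lam x \<longleftrightarrow>
     (\<exists>v\<in>verts E. x v \<noteq> 0) \<and>
     (\<forall>v\<in>verts E. (\<Sum>w\<in>verts E. adj E v w * x w) = lam * x v)"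

definition adj_eigenvalues :: "'a set set \<Rightarrow> real set" where
  "adj_eigenvalues E = {lam. \<exists>x. is_adj_eigenvector E lam x}"

text \<open>Spectral radius = largest adjacency eigenvalue (the adjacency matrix is real symmetric).\<close>
definition spectral_radius :: "'a set set \<Rightarrow> real" where
  "spectral_radius E = Max (adj_eigenvalues E)"

definition perron_vector :: "'a set set \<Rightarrow> ('a \<Rightarrow> real) \<Rightarrow> bool" where
  "perron_vector E x \<longleftrightarrow> is_adj_eigenvector E (spectral_radius E) x \<and>
     (\<forall>v\<in>verts E. x v > 0) \<and> (\<Sum>v\<in>verts E. (x v)^2) = 1"

definition contains_subgraph :: "'b set set \<Rightarrow> 'a set set \<Rightarrow> bool" where
  "contains_subgraph H E \<longleftrightarrow> (\<exists>f. inj_on f (verts H) \<and> (\<forall>e\<in>H. f ` e \<in> E))"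

text \<open>H(4,3): 4-cycle 0-1-2-3-0 and triangle 0-4-5-0 sharing vertex 0.\<close>
definition H43 :: "nat set set" where
  "H43 = {{0,1},{1,2},{2,3},{3,0},{0,4},{4,5},{5,0}}"

definition H43_free :: "'a set set \<Rightarrow> bool" where
  "H43_free E \<longleftrightarrow> \<not> contains_subgraph H43 E"

definition neighbours :: "'a set set \<Rightarrow> 'a \<Rightarrow> 'a set" where
  "neighbours E v = {w. {v, w} \<in> E}"

definition induced_edges :: "'a set set \<Rightarrow> 'a set \<Rightarrow> 'a set set" where
  "induced_edges E S = {e\<in>E. e \<subseteq> S}"

definition graph_iso :: "'a set \<Rightarrow> 'a set set \<Rightarrow> 'b set \<Rightarrow> 'b set set \<Rightarrow> bool" where
  "graph_iso V1 E1 V2 E2 \<longleftrightarrow> (\<exists>f. bij_betw f V1 V2 \<and>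
      (\<forall>e. e \<subseteq> V1 \<longrightarrow> (e \<in> E1 \<longleftrightarrow> f ` e \<in> E2)))"

definition star_verts :: "nat \<Rightarrow> nat set" where
  "star_verts t = {0..t}"

definition star_edges :: "nat \<Rightarrow> nat set set" where
  "star_edges t = {{0, i} | i. i \<in> {1..t}}"

end

theory Submission
  imports Defs
begin

text \<open>
  Write \<open>N\<close> for the neighbourhood of \<open>u = u\<^sup>*\<close>, \<open>c = x\<^sub>u\<close> and \<open>\<rho> = \<rho>(G)\<close>.  The book
  \<open>B\<^sub>k\<close> (\<open>k\<close> triangles sharing an edge) together with a disjoint edge is \<open>H(4,3)\<close>-free, has
  \<open>m = 2k + 2\<close> edges and spectral radius \<open>(1 + \<surd>(1 + 8k))/2\<close>, so extremality gives
  \<open>\<rho> \<ge> 13/2\<close> and \<open>\<rho>\<^sup>2 - \<rho> \<ge> m - 2\<close>.  Expanding \<open>\<rho>\<^sup>2 c\<close> with the eigen-equations and counting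
  the edges at \<open>u\<close>, inside \<open>N\<close> and beyond \<open>N\<close> turns the second bound into
  \<open>\<Sum>\<^bsub>v,w \<in> N, vw \<in> E\<^esub> (2x\<^sub>w - c) \<ge> 2(\<rho> - 2)c\<close> plus nonnegative terms.  This fails if \<open>G[N]\<close> has
  no edge, if its edges span at most three vertices, or if it has maximum degree one.  As \<open>u\<close> is adjacent to all
  of \<open>N\<close>, \<open>H(4,3)\<close>-freeness forbids in \<open>G[N]\<close> a path \<open>P\<^sub>3\<close> plus a disjoint edge and, together
  with the eigen-equations on the second neighbourhood, a path \<open>P\<^sub>4\<close>.  Two disjoint edges of
  \<open>G[N]\<close> would give one of these configurations (a \<open>P\<^sub>4\<close> if some edge joins them, otherwise a
  vertex of degree two supplies the \<open>P\<^sub>3\<close>).  So any two edges of \<open>G[N]\<close> meet, and since they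
  do not span only three vertices they all share a vertex: \<open>G[A\<^sub>+]\<close> is a star.
\<close>

lemma adj_commute: "adj E v w = adj E w v"
  by (simp add: adj_def insert_commute)

lemma adj_nonneg: "0 \<le> adj E v w"
  by (simp add: adj_def)

lemma adj_le_one: "adj E v w \<le> 1"
  by (simp add: adj_def)

lemma simple_graph_edge_neq: "simple_graph E \<Longrightarrow> {v, w} \<in> E \<Longrightarrow> v \<noteq> w"
  by (fastforce simp: simple_graph_def)

lemma simple_graph_edgeE:
  assumes "simple_graph E" "e \<in> E"
  obtains v w where "e = {v, w}" "v \<noteq> w"
  using assms by (auto simp: simple_graph_def card_2_iff)

lemma adj_self: "simple_graph E \<Longrightarrow> adj E v v = 0"
  using simple_graph_edge_neq[of E v v] by (auto simp: adj_def)

lemma finite_verts: "simple_graph E \<Longrightarrow> finite (verts E)"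
  unfolding simple_graph_def verts_def by (metis card_eq_0_iff finite_Union zero_neq_numeral)

lemma neighbours_subset_verts: "neighbours E v \<subseteq> verts E"
  by (auto simp: neighbours_def verts_def)

lemma sum_adj_eq_sum_neighbours:
  assumes "simple_graph E"
  shows "(\<Sum>w\<in>verts E. adj E v w * y w) = (\<Sum>w\<in>neighbours E v. y w)"
proof -
  have "(\<Sum>w\<in>verts E. adj E v w * y w) = (\<Sum>w\<in>verts E. if w \<in> neighbours E v then y w else 0)"
    by (intro sum.cong) (auto simp: adj_def neighbours_def)
  also have "\<dots> = (\<Sum>w\<in>neighbours E v. y w)"
    using finite_verts[OF assms] neighbours_subset_verts[of E v]
    by (simp add: sum.If_cases Int_absorb1)
  finally show ?thesis .
qed

lemma sum_sum_adj_eq_twice_card: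
  assumes "simple_graph E"
  shows "(\<Sum>v\<in>verts E. \<Sum>w\<in>verts E. adj E v w) = 2 * real (card E)"
proof -
  have fin: "finite E" "finite (verts E)" and two: "\<And>e. e \<in> E \<Longrightarrow> card e = 2"
    using assms finite_verts by (auto simp: simple_graph_def)
  have ordered_pairs: "card {(v, w). {v, w} = e} = 2" if e: "e \<in> E" for e
  proof -
    obtain a b where "e = {a, b}" "a \<noteq> b" using two[OF e] by (meson card_2_iff)
    then have "{(v, w). {v, w} = e} = {(a, b), (b, a)}" by (auto simp: doubleton_eq_iff)
    then show ?thesis using \<open>a \<noteq> b\<close> by simp
  qed
  have "(\<Sum>v\<in>verts E. \<Sum>w\<in>verts E. adj E v w) = real (card (SIGMA v:verts E. neighbours E v))"
  proof -
    have "finite (neighbours E v)" for v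
      using fin(2) neighbours_subset_verts by (rule finite_subset[rotated])
    then show ?thesis
      using fin(2) sum_adj_eq_sum_neighbours[OF assms, where y = "\<lambda>_. 1"]
      by (simp add: card_SigmaI)
  qed
  also have "(SIGMA v:verts E. neighbours E v) = (\<Union>e\<in>E. {(v, w). {v, w} = e})"
    by (auto simp: neighbours_def verts_def)
  also have "card \<dots> = (\<Sum>e\<in>E. card {(v, w). {v, w} = e})"
    using fin ordered_pairs by (intro card_UN_disjoint) (auto intro: card_ge_0_finite)
  also have "\<dots> = 2 * card E"
    using ordered_pairs by simp
  finally show ?thesis by simp
qed

lemma sum_adj_le_one:
  assumes "finite A" and unique: "\<And>v v'. v \<in> A \<Longrightarrow> v' \<in> A \<Longrightarrow> {v, w} \<in> E \<Longrightarrow> {v', w} \<in> E \<Longrightarrow> v = v'"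
  shows "(\<Sum>v\<in>A. adj E v w) \<le> 1"
proof (cases "\<exists>v\<in>A. {v, w} \<in> E")
  case True
  then obtain v where v: "v \<in> A" "{v, w} \<in> E" by blast
  have "(\<Sum>v'\<in>A. adj E v' w) = (\<Sum>v'\<in>{v}. adj E v' w)"
    using assms v by (intro sum.mono_neutral_right) (auto simp: adj_def)
  then show ?thesis
    by (simp add: adj_le_one)
next
  case False
  then show ?thesis
    by (simp add: adj_def)
qed

lemma real_card_Diff_singleton: "finite A \<Longrightarrow> a \<in> A \<Longrightarrow> real (card (A - {a})) = real (card A) - 1"
  by (metis One_nat_def card_Diff_singleton card_gt_0_iff empty_iff of_nat_1 of_nat_diff Suc_leI)

lemma contains_H43_iff:
  "contains_subgraph H43 E \<longleftrightarrow> (\<exists>a0 a1 a2 a3 a4 a5. distinct [a0, a1, a2, a3, a4, a5] \<and>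
     {a0, a1} \<in> E \<and> {a1, a2} \<in> E \<and> {a2, a3} \<in> E \<and> {a3, a0} \<in> E \<and>
     {a0, a4} \<in> E \<and> {a4, a5} \<in> E \<and> {a5, a0} \<in> E)"
  (is "_ \<longleftrightarrow> ?rhs")
proof -
  have V: "verts H43 = {0, 1, 2, 3, 4, 5}"
    by (auto simp: verts_def H43_def)
  show ?thesis
  proof
    assume "contains_subgraph H43 E"
    then obtain f where "inj_on f (verts H43)" and e: "\<forall>e\<in>H43. f ` e \<in> E"
      by (auto simp: contains_subgraph_def)
    then have "distinct [f 0, f 1, f 2, f 3, f 4, f 5]"
      unfolding V by (simp add: inj_on_def)
    moreover have "{f 0, f 1} \<in> E" "{f 1, f 2} \<in> E" "{f 2, f 3} \<in> E" "{f 3, f 0} \<in> E"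
      "{f 0, f 4} \<in> E" "{f 4, f 5} \<in> E" "{f 5, f 0} \<in> E"
      using e by (simp_all add: H43_def)
    ultimately show ?rhs
      by blast
  next
    assume ?rhs
    then obtain a0 a1 a2 a3 a4 a5 where d: "distinct [a0, a1, a2, a3, a4, a5]" and
      e: "{a0, a1} \<in> E" "{a1, a2} \<in> E" "{a2, a3} \<in> E" "{a3, a0} \<in> E"
        "{a0, a4} \<in> E" "{a4, a5} \<in> E" "{a5, a0} \<in> E"
      by blast
    let ?f = "\<lambda>i. [a0, a1, a2, a3, a4, a5] ! i"
    have "inj_on ?f (verts H43)" unfolding V using d by (simp add: inj_on_def) blast
    moreover have "\<forall>e\<in>H43. ?f ` e \<in> E" using e by (simp add: H43_def)
    ultimately show "contains_subgraph H43 E" unfolding contains_subgraph_def by blast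
  qed
qed

lemma contains_H43I:
  assumes "distinct [a0, a1, a2, a3, a4, a5]"
    and "{a0, a1} \<in> E" "{a1, a2} \<in> E" "{a2, a3} \<in> E" "{a3, a0} \<in> E"
    and "{a0, a4} \<in> E" "{a4, a5} \<in> E" "{a5, a0} \<in> E"
  shows "contains_subgraph H43 E"
  unfolding contains_H43_iff using assms by blast

lemma intersecting_edges_star_or_small:
  assumes "simple_graph F"
    and intersect: "\<And>e e'. e \<in> F \<Longrightarrow> e' \<in> F \<Longrightarrow> e \<inter> e' \<noteq> {}"
  shows "(\<exists>z. \<forall>e\<in>F. z \<in> e) \<or> card (verts F) \<le> 3"
proof (rule ccontr)
  assume no_star: "\<not> ?thesis"
  then obtain e0 where "e0 \<in> F"
    by blast
  then obtain a b where ab: "{a, b} \<in> F" "a \<noteq> b"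
    using assms(1) by (metis simple_graph_edgeE)
  obtain e1 where e1: "e1 \<in> F" "a \<notin> e1"
    using no_star by blast
  then obtain d where e1_eq: "e1 = {b, d}" "d \<noteq> a"
    using intersect[OF ab(1) e1(1)] assms(1) by (elim simple_graph_edgeE) auto
  obtain e2 where e2: "e2 \<in> F" "b \<notin> e2"
    using no_star by blast
  then obtain d' where e2_eq: "e2 = {a, d'}" "d' \<noteq> b"
    using intersect[OF ab(1) e2(1)] assms(1) by (elim simple_graph_edgeE) auto
  have "d' = d"
    using intersect[OF e1(1) e2(1)] e1_eq e2_eq ab(2) by auto
  have "e \<subseteq> {a, b, d}" if e: "e \<in> F" for e
  proof
    fix p assume "p \<in> e"
    obtain q where "e = {p, q}"
      using assms(1) e \<open>p \<in> e\<close> by (elim simple_graph_edgeE) auto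
    then show "p \<in> {a, b, d}"
      using intersect[OF e ab(1)] intersect[OF e e1(1)] intersect[OF e e2(1)]
        e1_eq e2_eq \<open>d' = d\<close> ab(2) by auto
  qed
  then have "card (verts F) \<le> card {a, b, d}"
    by (intro card_mono) (auto simp: verts_def)
  also have "\<dots> \<le> 3"
    by (rule card_insert_le_m1) (auto simp: card_insert_if)
  finally show False
    using no_star by blast
qed

lemma bij_betw_centre_zero:
  assumes "finite A" "z \<in> A"
  obtains f where "bij_betw f A {0..card (A - {z})}" "f z = 0"
proof -
  define t where "t = card (A - {z})"
  have "card (A - {z}) = card {1..t}"
    by (simp add: t_def)
  then obtain g where g: "bij_betw g (A - {z}) {1..t}"
    using finite_same_card_bij assms(1) by (metis finite_Diff finite_atLeastAtMost)
  have "bij_betw (g(z := 0)) (A - {z}) {1..t}"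
    using g by (rule bij_betw_cong[THEN iffD1, rotated]) simp
  moreover have "bij_betw (g(z := 0)) {z} {0}"
    by simp
  ultimately have "bij_betw (g(z := 0)) ((A - {z}) \<union> {z}) ({1..t} \<union> {0})"
    by (rule bij_betw_combine) simp
  moreover have "(A - {z}) \<union> {z} = A" "{1..t} \<union> {0} = {0..t}"
    using assms(2) by auto
  ultimately have "bij_betw (g(z := 0)) A {0..t}"
    by argo
  then show ?thesis
    using that[of "g(z := 0)"] by (simp add: t_def)
qed

lemma graph_iso_star:
  assumes "simple_graph E" "finite A" "z \<in> A"
    and centre: "\<And>e. e \<in> E \<Longrightarrow> e \<subseteq> A \<Longrightarrow> z \<in> e"
    and spokes: "\<And>v. v \<in> A - {z} \<Longrightarrow> {z, v} \<in> E"
  shows "graph_iso A (induced_edges E A) (star_verts (card (A - {z}))) (star_edges (card (A - {z})))"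
proof -
  define t where "t = card (A - {z})"
  obtain f where f: "bij_betw f A {0..t}" "f z = 0"
    using bij_betw_centre_zero[OF assms(2,3)] unfolding t_def .
  have f_nonzero: "f l \<in> {1..t}" if l: "l \<in> A - {z}" for l
  proof -
    have "f l \<noteq> f z"
      using inj_on_eq_iff[OF bij_betw_imp_inj_on[OF f(1)]] l assms(3) by blast
    then show ?thesis
      using bij_betw_apply[OF f(1)] l f(2) by fastforce
  qed
  have "e \<in> induced_edges E A \<longleftrightarrow> f ` e \<in> star_edges t" if e: "e \<subseteq> A" for e
  proof
    assume "e \<in> induced_edges E A"
    then obtain l where "e = {z, l}" "l \<noteq> z"
      using assms(1) centre by (auto simp: induced_edges_def elim!: simple_graph_edgeE)
    then show "f ` e \<in> star_edges t"
      using f_nonzero[of l] e f(2) unfolding star_edges_def by auto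
  next
    assume "f ` e \<in> star_edges t"
    then obtain i where i: "f ` e = {0, i}" "i \<in> {1..t}"
      by (auto simp: star_edges_def)
    then obtain l where l: "l \<in> A" "f l = i"
      using f(1) by (metis atLeastAtMost_iff bij_betw_imp_surj_on imageE le0)
    then have "l \<noteq> z" "f ` {z, l} = f ` e"
      using i f(2) by auto
    then have "e = {z, l}"
      using f(1) e l(1) assms(3) by (subst (asm) inj_on_image_eq_iff[of f A]) (auto simp: bij_betw_def)
    then show "e \<in> induced_edges E A"
      using spokes[of l] l(1) \<open>l \<noteq> z\<close> e by (simp add: induced_edges_def)
  qed
  with f(1) show ?thesis
    unfolding graph_iso_def star_verts_def t_def by blast
qed

section \<open>A book with a disjoint edge\<close>

definition book_plus_edge :: "nat \<Rightarrow> nat set set" where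
  "book_plus_edge k =
     insert {0, 1} ((\<lambda>i. {0, i}) ` {2..k+1} \<union> (\<lambda>i. {1, i}) ` {2..k+1} \<union> {{k+2, k+3}})"

lemma simple_graph_book_plus_edge: "simple_graph (book_plus_edge k)"
  by (auto simp: simple_graph_def book_plus_edge_def)

lemma verts_book_plus_edge: "verts (book_plus_edge k) = {0..k+3}"
proof
  show "verts (book_plus_edge k) \<subseteq> {0..k+3}"
    by (auto simp: verts_def book_plus_edge_def)
  show "{0..k+3} \<subseteq> verts (book_plus_edge k)"
  proof
    fix v :: nat assume "v \<in> {0..k+3}"
    then have "v = 0 \<or> v = 1 \<or> v \<in> {2..k+1} \<or> v = k+2 \<or> v = k+3" by auto
    then show "v \<in> verts (book_plus_edge k)" by (auto simp: verts_def book_plus_edge_def)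
  qed
qed

lemma card_book_plus_edge: "card (book_plus_edge k) = 2 * k + 2"
proof -
  let ?pages = "\<lambda>c. (\<lambda>i. {c::nat, i}) ` {2..k+1}"
  let ?P = "?pages 0 \<union> ?pages 1"
  have "card (?pages c) = k" for c
    by (subst card_image) (auto intro!: inj_onI simp: doubleton_eq_iff)
  moreover have "?pages 0 \<inter> ?pages 1 = {}"
    by (force simp: doubleton_eq_iff)
  ultimately have "card ?P = 2 * k"
    by (simp add: card_Un_disjoint)
  moreover have "{k+2, k+3} \<notin> ?P" "{0, 1} \<notin> insert {k+2, k+3} ?P"
    by (force simp: doubleton_eq_iff)+
  ultimately show ?thesis
    unfolding book_plus_edge_def Un_insert_right sup_bot_right by simp
qed

lemma neighbours_book_plus_edge:
  shows "neighbours (book_plus_edge k) 0 = insert 1 {2..k+1}"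
    and "neighbours (book_plus_edge k) 1 = insert 0 {2..k+1}"
    and "i \<in> {2..k+1} \<Longrightarrow> neighbours (book_plus_edge k) i = {0, 1}"
    and "neighbours (book_plus_edge k) (k+2) = {k+3}"
    and "neighbours (book_plus_edge k) (k+3) = {k+2}"
  by (force simp: neighbours_def book_plus_edge_def doubleton_eq_iff)+

lemma book_plus_edge_three_neighbours:
  assumes "{a, p} \<in> book_plus_edge k" "{a, q} \<in> book_plus_edge k" "{a, r} \<in> book_plus_edge k"
    and "distinct [p, q, r]"
  shows "a \<in> {0, 1}"
proof -
  have nb: "p \<in> neighbours (book_plus_edge k) a" "q \<in> neighbours (book_plus_edge k) a"
    "r \<in> neighbours (book_plus_edge k) a"
    using assms(1-3) by (simp_all add: neighbours_def)
  have "a \<in> verts (book_plus_edge k)"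
    using assms(1) by (auto simp: verts_def)
  then consider "a \<in> {0, 1}" | "a \<in> {2..k+1}" | "a = k+2" | "a = k+3"
    unfolding verts_book_plus_edge by force
  then show ?thesis
  proof cases
    case 2
    then show ?thesis using nb assms(4) by (auto simp: neighbours_book_plus_edge(3))
  next
    case 3
    then show ?thesis using nb assms(4) neighbours_book_plus_edge(4)[of k] by auto
  next
    case 4
    then show ?thesis using nb assms(4) neighbours_book_plus_edge(5)[of k] by auto
  qed
qed

lemma H43_free_book_plus_edge: "H43_free (book_plus_edge k)"
proof -
  let ?B = "book_plus_edge k" and ?pages = "{2..k+1}"
  let ?nb = "neighbours ?B"
  have False if d: "distinct [a0, a1, a2, a3, a4, a5]"
    and e: "{a0, a1} \<in> ?B" "{a1, a2} \<in> ?B" "{a0, a4} \<in> ?B" "{a4, a5} \<in> ?B" "{a5, a0} \<in> ?B"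
    for a0 a1 a2 a3 a4 a5
  proof -
    have nb: "a1 \<in> ?nb a0" "a2 \<in> ?nb a1" "a4 \<in> ?nb a0" "a5 \<in> ?nb a4" "a5 \<in> ?nb a0"
      using e by (simp_all add: neighbours_def insert_commute)
    have spine: "a0 \<in> {0, 1}"
      using e d by (intro book_plus_edge_three_neighbours[of a0 a1 k a4 a5]) (auto simp: insert_commute)
    then have nb_a0: "?nb a0 = insert (1 - a0) ?pages"
      using neighbours_book_plus_edge(1,2)[of k] by auto
    have "1 - a0 \<in> {a4, a5}"
    proof (rule ccontr)
      assume "1 - a0 \<notin> {a4, a5}"
      then have "a4 \<in> ?pages" "a5 \<in> ?pages"
        using nb(3,5) nb_a0 by auto
      then show False
        using nb(4) by (auto simp: neighbours_book_plus_edge)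
    qed
    then have "a1 \<in> ?pages"
      using nb(1) nb_a0 d by auto
    then have "a2 \<in> {0, 1}"
      using nb(2) by (simp add: neighbours_book_plus_edge)
    then show False
      using spine \<open>1 - a0 \<in> {a4, a5}\<close> d by auto
  qed
  then show ?thesis
    unfolding H43_free_def contains_H43_iff by blast
qed

lemma is_adj_eigenvector_book_plus_edge_iff:
  "is_adj_eigenvector (book_plus_edge k) \<mu> y \<longleftrightarrow> (\<exists>v\<in>{0..k+3}. y v \<noteq> 0) \<and>
     y 1 + (\<Sum>i=2..k+1. y i) = \<mu> * y 0 \<and> y 0 + (\<Sum>i=2..k+1. y i) = \<mu> * y 1 \<and>
     (\<forall>i\<in>{2..k+1}. y 0 + y 1 = \<mu> * y i) \<and> y (k+3) = \<mu> * y (k+2) \<and> y (k+2) = \<mu> * y (k+3)"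
  (is "_ \<longleftrightarrow> ?rhs")
proof -
  let ?B = "book_plus_edge k"
  have ball: "(\<forall>v\<in>{0..k+3}. P v) \<longleftrightarrow> P 0 \<and> P 1 \<and> (\<forall>i\<in>{2..k+1}. P i) \<and> P (k+2) \<and> P (k+3)"
    for P :: "nat \<Rightarrow> bool"
  proof -
    have split: "{0..k+3} = {0, 1, k+2, k+3} \<union> {2..k+1}"
      by auto
    show ?thesis
      by (subst split) auto
  qed
  have "is_adj_eigenvector ?B \<mu> y \<longleftrightarrow> (\<exists>v\<in>{0..k+3}. y v \<noteq> 0) \<and>
      (\<forall>v\<in>{0..k+3}. (\<Sum>w\<in>neighbours ?B v. y w) = \<mu> * y v)"
    unfolding is_adj_eigenvector_def sum_adj_eq_sum_neighbours[OF simple_graph_book_plus_edge]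
    unfolding verts_book_plus_edge ..
  also have "\<dots> \<longleftrightarrow> ?rhs"
    unfolding ball[where P = "\<lambda>v. (\<Sum>w\<in>neighbours ?B v. y w) = \<mu> * y v"]
    by (simp add: neighbours_book_plus_edge[simplified])
  finally show ?thesis .
qed

definition book_root :: "nat \<Rightarrow> real" where
  "book_root k = (1 + sqrt (1 + 8 * real k)) / 2"

lemma book_root_sq: "(book_root k)\<^sup>2 = book_root k + 2 * real k"
  by (simp add: book_root_def power2_eq_square algebra_simps)

lemma book_root_ge_one: "1 \<le> book_root k"
  by (simp add: book_root_def)

lemma book_root_ge_thirteen_halves: "18 \<le> k \<Longrightarrow> 13/2 \<le> book_root k"
proof -
  assume "18 \<le> k"
  then have "12 \<le> sqrt (1 + 8 * real k)"
    by (intro real_le_rsqrt) simp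
  then show ?thesis
    by (simp add: book_root_def)
qed

lemma book_root_le_imp_sq_minus_ge: "book_root k \<le> r \<Longrightarrow> 2 * real k \<le> r\<^sup>2 - r"
proof -
  assume le: "book_root k \<le> r"
  then have "0 \<le> (r - book_root k) * (r + book_root k - 1)"
    using book_root_ge_one[of k] by simp
  then show ?thesis
    using book_root_sq[of k] by (simp add: algebra_simps power2_eq_square)
qed

lemma book_root_eigenvalue: "book_root k \<in> adj_eigenvalues (book_plus_edge k)"
proof -
  let ?r = "book_root k"
  define y where "y i = (if i \<le> 1 then 1 else if i \<le> k+1 then 2 / ?r else 0)" for i :: nat
  have "1 + real k * (2 / ?r) = ?r"
    using book_root_sq[of k] book_root_ge_one[of k] by (simp add: field_simps power2_eq_square)
  then have "is_adj_eigenvector (book_plus_edge k) ?r y"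
    using book_root_ge_one[of k]
    unfolding is_adj_eigenvector_book_plus_edge_iff by (auto simp: y_def intro: bexI[of _ 0])
  then show ?thesis
    by (auto simp: adj_eigenvalues_def)
qed

lemma adj_eigenvalues_book_plus_edge:
  "adj_eigenvalues (book_plus_edge k) \<subseteq> {0, 1, -1, book_root k, 1 - book_root k}"
proof
  fix \<mu> assume "\<mu> \<in> adj_eigenvalues (book_plus_edge k)"
  then obtain y where "is_adj_eigenvector (book_plus_edge k) \<mu> y"
    by (auto simp: adj_eigenvalues_def)
  then have nonzero: "\<exists>v\<in>{0..k+3}. y v \<noteq> 0"
    and e0: "y 1 + (\<Sum>i=2..k+1. y i) = \<mu> * y 0" and e1: "y 0 + (\<Sum>i=2..k+1. y i) = \<mu> * y 1"
    and pages: "\<And>i. i \<in> {2..k+1} \<Longrightarrow> y 0 + y 1 = \<mu> * y i"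
    and e2: "y (k+3) = \<mu> * y (k+2)" and e3: "y (k+2) = \<mu> * y (k+3)"
    unfolding is_adj_eigenvector_book_plus_edge_iff by blast+
  show "\<mu> \<in> {0, 1, -1, book_root k, 1 - book_root k}"
  proof (rule ccontr)
    assume "\<mu> \<notin> {0, 1, -1, book_root k, 1 - book_root k}"
    then have \<mu>: "\<mu> \<noteq> 0" "\<mu> \<noteq> 1" "\<mu> \<noteq> -1" "\<mu> \<noteq> book_root k" "\<mu> \<noteq> 1 - book_root k"
      by auto
    have "(1 - \<mu>) * (1 + \<mu>) * y (k+2) = 0"
      using e2 e3 by (simp add: algebra_simps)
    then have y2: "y (k+2) = 0" and y3: "y (k+3) = 0"
      using \<mu> e2 by auto
    have "(1 + \<mu>) * (y 1 - y 0) = 0"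
      using e0 e1 by (simp add: algebra_simps)
    then have y1: "y 1 = y 0"
      using \<mu> by simp
    have yi: "y i = 2 * y 0 / \<mu>" if "i \<in> {2..k+1}" for i
      using pages[OF that] y1 \<mu> by (simp add: field_simps)
    then have "y 0 + real k * (2 * y 0 / \<mu>) = \<mu> * y 0"
      using e0 y1 by simp
    then have "y 0 * ((\<mu> - book_root k) * (\<mu> - (1 - book_root k))) = 0"
      using \<mu> book_root_sq[of k] by (simp add: field_simps power2_eq_square)
    then have y0: "y 0 = 0"
      using \<mu> by simp
    have "y v = 0" if "v \<in> {0..k+3}" for v
    proof -
      have "v = 0 \<or> v = 1 \<or> v \<in> {2..k+1} \<or> v = k+2 \<or> v = k+3"
        using that by auto
      then show ?thesis
        using y0 y1 yi y2 y3 by auto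
    qed
    then show False
      using nonzero by blast
  qed
qed

lemma book_root_le_spectral_radius: "book_root k \<le> spectral_radius (book_plus_edge k)"
  unfolding spectral_radius_def
  by (rule Max_ge[OF finite_subset[OF adj_eigenvalues_book_plus_edge] book_root_eigenvalue]) simp

section \<open>The neighbourhood of a vertex of maximum Perron weight\<close>

locale H43_free_large_rho =
  fixes E :: "'a set set" and x :: "'a \<Rightarrow> real" and u :: 'a and \<rho> :: real
  assumes simple: "simple_graph E" and H43_free: "H43_free E" and u_vert: "u \<in> verts E"
    and x_pos: "\<And>v. v \<in> verts E \<Longrightarrow> 0 < x v"
    and x_le: "\<And>v. v \<in> verts E \<Longrightarrow> x v \<le> x u"
    and eigen: "\<And>v. v \<in> verts E \<Longrightarrow> (\<Sum>w\<in>verts E. adj E v w * x w) = \<rho> * x v"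
    and rho_ge: "13/2 \<le> \<rho>"
    and rho_sq_ge: "real (card E) - 2 \<le> \<rho>\<^sup>2 - \<rho>"
begin

abbreviation "V \<equiv> verts E"

abbreviation "N \<equiv> neighbours E u"

abbreviation "Out \<equiv> V - insert u N"

abbreviation "c \<equiv> x u"

lemma finite_V: "finite V"
  using simple by (rule finite_verts)

lemma N_subset_V: "N \<subseteq> V"
  by (rule neighbours_subset_verts)

lemma finite_N: "finite N"
  using finite_V N_subset_V by (rule finite_subset[rotated])

lemma finite_Out: "finite Out"
  using finite_V by simp

lemma mem_N_iff: "v \<in> N \<longleftrightarrow> {u, v} \<in> E"
  by (simp add: neighbours_def)

lemma u_notin_N: "u \<notin> N"
  using simple_graph_edge_neq[OF simple, of u u] by (auto simp: mem_N_iff)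

lemma c_pos: "0 < c"
  using x_pos[OF u_vert] .

lemma x_nonneg: "v \<in> V \<Longrightarrow> 0 \<le> x v"
  using x_pos[of v] by simp

lemma adj_u: "adj E u w = (if w \<in> N then 1 else 0)" and adj_u': "adj E w u = (if w \<in> N then 1 else 0)"
  by (simp_all add: adj_def mem_N_iff insert_commute)

lemma adj_mult_x_le: "w \<in> V \<Longrightarrow> adj E v w * x w \<le> c"
  using x_le[of w] x_pos[of w] by (simp add: adj_def)

lemma sum_V_split: "(\<Sum>w\<in>V. f w) = f u + (\<Sum>w\<in>N. f w) + (\<Sum>w\<in>Out. f w)"
proof -
  have V: "V = insert u (N \<union> Out)"
    using N_subset_V u_vert by auto
  have "(\<Sum>w\<in>V. f w) = (\<Sum>w\<in>insert u (N \<union> Out). f w)"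
    by (rule arg_cong[OF V])
  also have "\<dots> = f u + (\<Sum>w\<in>N \<union> Out. f w)"
    using finite_N finite_Out u_notin_N by (intro sum.insert) auto
  also have "(\<Sum>w\<in>N \<union> Out. f w) = (\<Sum>w\<in>N. f w) + (\<Sum>w\<in>Out. f w)"
    using finite_N finite_Out by (intro sum.union_disjoint) auto
  finally show ?thesis
    by (simp add: add.assoc)
qed

lemma eigen_split:
  "v \<in> V \<Longrightarrow> \<rho> * x v = adj E v u * c + (\<Sum>w\<in>N. adj E v w * x w) + (\<Sum>w\<in>Out. adj E v w * x w)"
  using eigen[of v] sum_V_split[of "\<lambda>w. adj E v w * x w"] by simp

lemma eigen_N: "v \<in> N \<Longrightarrow> \<rho> * x v = c + (\<Sum>w\<in>N. adj E v w * x w) + (\<Sum>w\<in>Out. adj E v w * x w)"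
  using eigen_split[of v] N_subset_V by (auto simp: adj_u')

lemma eigen_Out: "w \<in> Out \<Longrightarrow> \<rho> * x w = (\<Sum>y\<in>N. adj E w y * x y) + (\<Sum>y\<in>Out. adj E w y * x y)"
  using eigen_split[of w] by (simp add: adj_u')

lemma rho_mult_c: "\<rho> * c = (\<Sum>w\<in>N. x w)"
  using eigen_split[OF u_vert] by (simp add: adj_u adj_self[OF simple] Diff_iff)

lemma rho_sq_mult_c:
  "\<rho>\<^sup>2 * c = real (card N) * c + (\<Sum>v\<in>N. \<Sum>w\<in>N. adj E v w * x w) + (\<Sum>v\<in>N. \<Sum>w\<in>Out. adj E v w * x w)"
proof -
  have "\<rho>\<^sup>2 * c = \<rho> * (\<rho> * c)"
    by (simp add: power2_eq_square)
  also have "\<dots> = (\<Sum>v\<in>N. \<rho> * x v)"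
    by (simp add: rho_mult_c sum_distrib_left)
  also have "\<dots> = (\<Sum>v\<in>N. c + (\<Sum>w\<in>N. adj E v w * x w) + (\<Sum>w\<in>Out. adj E v w * x w))"
    by (intro sum.cong refl eigen_N)
  finally show ?thesis
    by (simp add: sum.distrib)
qed

definition "inner = (\<Sum>v\<in>N. \<Sum>w\<in>N. adj E v w * (2 * x w - c))"

definition "cross = (\<Sum>v\<in>N. \<Sum>w\<in>Out. adj E v w * (c - x w))"

definition "outer = (\<Sum>v\<in>Out. \<Sum>w\<in>Out. adj E v w)"

lemma twice_card_E_split:
  "2 * real (card E) = 2 * real (card N) + (\<Sum>v\<in>N. \<Sum>w\<in>N. adj E v w)
     + 2 * (\<Sum>v\<in>N. \<Sum>w\<in>Out. adj E v w) + outer"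
proof -
  have row: "(\<Sum>w\<in>V. adj E v w) = adj E v u + (\<Sum>w\<in>N. adj E v w) + (\<Sum>w\<in>Out. adj E v w)" for v
    by (rule sum_V_split)
  have "2 * real (card E) = (\<Sum>v\<in>V. \<Sum>w\<in>V. adj E v w)"
    using sum_sum_adj_eq_twice_card[OF simple] by simp
  also have "\<dots> = (\<Sum>w\<in>V. adj E u w) + (\<Sum>v\<in>N. \<Sum>w\<in>V. adj E v w) + (\<Sum>v\<in>Out. \<Sum>w\<in>V. adj E v w)"
    by (rule sum_V_split)
  also have "(\<Sum>w\<in>V. adj E u w) = real (card N)"
    using row[of u] by (simp add: adj_u adj_self[OF simple])
  also have "(\<Sum>v\<in>N. \<Sum>w\<in>V. adj E v w)
      = real (card N) + (\<Sum>v\<in>N. \<Sum>w\<in>N. adj E v w) + (\<Sum>v\<in>N. \<Sum>w\<in>Out. adj E v w)"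
    by (simp add: row adj_u' sum.distrib)
  also have "(\<Sum>v\<in>Out. \<Sum>w\<in>V. adj E v w) = (\<Sum>v\<in>Out. \<Sum>w\<in>N. adj E v w) + outer"
    by (simp add: row adj_u' sum.distrib outer_def)
  also have "(\<Sum>v\<in>Out. \<Sum>w\<in>N. adj E v w) = (\<Sum>v\<in>N. \<Sum>w\<in>Out. adj E v w)"
    by (subst sum.swap) (simp add: adj_commute)
  finally show ?thesis
    by simp
qed

text \<open>Multiply \<open>\<rho>\<^sup>2 - \<rho> \<ge> m - 2\<close> by \<open>c\<close>, then expand \<open>\<rho>\<^sup>2 c\<close> by the eigen-equations
  and \<open>2m\<close> by counting edges at \<open>u\<close>, in \<open>N\<close> and in \<open>Out\<close>: the contributions \<open>|N| c\<close> of
  the edges at \<open>u\<close> cancel.\<close>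

lemma inner_ge: "2 * (\<rho> - 2) * c + 2 * cross + outer * c \<le> inner"
proof -
  define NN where "NN = (\<Sum>v\<in>N. \<Sum>w\<in>N. adj E v w)"
  define NO where "NO = (\<Sum>v\<in>N. \<Sum>w\<in>Out. adj E v w)"
  define xNN where "xNN = (\<Sum>v\<in>N. \<Sum>w\<in>N. adj E v w * x w)"
  define xNO where "xNO = (\<Sum>v\<in>N. \<Sum>w\<in>Out. adj E v w * x w)"
  have inner: "inner = 2 * xNN - NN * c"
    unfolding inner_def xNN_def NN_def
    by (simp add: algebra_simps sum_subtractf sum_distrib_left sum_distrib_right)
  have cross: "cross = NO * c - xNO"
    unfolding cross_def xNO_def NO_def
    by (simp add: algebra_simps sum_subtractf sum_distrib_left sum_distrib_right)
  have "(real (card E) - 2) * c \<le> (\<rho>\<^sup>2 - \<rho>) * c"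
    using rho_sq_ge c_pos by (simp add: mult_right_mono)
  then have "(2 * real (card E)) * c - 4 * c \<le> 2 * (\<rho>\<^sup>2 * c) - 2 * (\<rho> * c)"
    by (simp add: algebra_simps)
  then have "(2 * real (card N) + NN + 2 * NO + outer) * c - 4 * c
      \<le> 2 * (real (card N) * c + xNN + xNO) - 2 * (\<rho> * c)"
    unfolding twice_card_E_split rho_sq_mult_c NN_def NO_def xNN_def xNO_def .
  then show ?thesis
    unfolding inner cross by (simp add: algebra_simps)
qed

lemma cross_nonneg: "0 \<le> cross"
  unfolding cross_def using x_le by (intro sum_nonneg mult_nonneg_nonneg adj_nonneg) auto

lemma outer_nonneg: "0 \<le> outer"
  unfolding outer_def by (intro sum_nonneg adj_nonneg)

lemma inner_ge_rho: "2 * (\<rho> - 2) * c \<le> inner"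
proof -
  have "0 \<le> outer * c"
    using outer_nonneg c_pos by simp
  then show ?thesis
    using inner_ge cross_nonneg by linarith
qed

lemma nine_c_le_inner: "9 * c \<le> inner"
proof -
  have "9 * c \<le> 2 * (\<rho> - 2) * c"
    using rho_ge c_pos by (intro mult_right_mono) auto
  then show ?thesis
    using inner_ge_rho by linarith
qed

lemma inner_eq_restrict:
  assumes "S \<subseteq> N" and within: "\<And>v w. v \<in> N \<Longrightarrow> w \<in> N \<Longrightarrow> {v, w} \<in> E \<Longrightarrow> v \<in> S"
  shows "inner = (\<Sum>v\<in>S. \<Sum>w\<in>S. adj E v w * (2 * x w - c))"
proof -
  have zero: "adj E v w = 0" if "v \<in> N" "w \<in> N" "v \<notin> S \<or> w \<notin> S" for v w
    using that within[of v w] within[of w v] by (auto simp: adj_def insert_commute)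
  have "inner = (\<Sum>v\<in>S. \<Sum>w\<in>N. adj E v w * (2 * x w - c))"
    unfolding inner_def using assms(1) finite_N zero
    by (intro sum.mono_neutral_right) (auto intro!: sum.neutral)
  also have "\<dots> = (\<Sum>v\<in>S. \<Sum>w\<in>S. adj E v w * (2 * x w - c))"
    using assms(1) finite_N zero by (intro sum.cong refl sum.mono_neutral_right) auto
  finally show ?thesis .
qed

lemma inner_le_within:
  assumes "S \<subseteq> N" and within: "\<And>v w. v \<in> N \<Longrightarrow> w \<in> N \<Longrightarrow> {v, w} \<in> E \<Longrightarrow> v \<in> S"
  shows "inner \<le> real (card S) * (real (card S) - 1) * c"
proof -
  have finS: "finite S"
    using assms(1) finite_N by (rule finite_subset)
  have row: "(\<Sum>w\<in>S. adj E v w * (2 * x w - c)) \<le> (real (card S) - 1) * c" if "v \<in> S" for v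
  proof -
    have "(\<Sum>w\<in>S. adj E v w * (2 * x w - c)) = (\<Sum>w\<in>S - {v}. adj E v w * (2 * x w - c))"
      using finS that by (intro sum.mono_neutral_right) (auto simp: adj_self[OF simple])
    also have "\<dots> \<le> (\<Sum>w\<in>S - {v}. c)"
      using assms(1) N_subset_V x_le c_pos by (intro sum_mono) (auto simp: adj_def)
    also have "\<dots> = (real (card S) - 1) * c"
      by (simp only: sum_constant real_card_Diff_singleton[OF finS that])
    finally show ?thesis .
  qed
  have "inner = (\<Sum>v\<in>S. \<Sum>w\<in>S. adj E v w * (2 * x w - c))"
    using assms by (rule inner_eq_restrict)
  also have "\<dots> \<le> (\<Sum>v\<in>S. (real (card S) - 1) * c)"
    using row by (rule sum_mono)
  finally show ?thesis
    by simp
qed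

lemma N_has_edge: "\<exists>a\<in>N. \<exists>b\<in>N. {a, b} \<in> E"
proof (rule ccontr)
  assume "\<not> ?thesis"
  then have "inner = 0"
    unfolding inner_def by (intro sum.neutral ballI) (auto simp: adj_def)
  then show False
    using nine_c_le_inner c_pos by simp
qed

lemma N_edges_within_small_False:
  assumes "S \<subseteq> N" "card S \<le> 3"
    and within: "\<And>v w. v \<in> N \<Longrightarrow> w \<in> N \<Longrightarrow> {v, w} \<in> E \<Longrightarrow> v \<in> S"
  shows False
proof -
  from assms(2) consider "card S = 0" | "card S = 1" | "card S = 2" | "card S = 3"
    by linarith
  then have "real (card S) * (real (card S) - 1) \<le> 6"
    by cases simp_all
  then have "real (card S) * (real (card S) - 1) * c \<le> 6 * c"
    using c_pos by (intro mult_right_mono) auto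
  moreover have "inner \<le> real (card S) * (real (card S) - 1) * c"
    using assms(1) within by (rule inner_le_within)
  ultimately show False
    using nine_c_le_inner c_pos by linarith
qed

lemma not_contains_H43: "\<not> contains_subgraph H43 E"
  using H43_free by (simp add: H43_free_def)

lemma N_path_edge_False:
  assumes "p \<in> N" "q \<in> N" "r \<in> N" "s \<in> N" "t \<in> N" and "distinct [p, q, r, s, t]"
    and "{p, q} \<in> E" "{q, r} \<in> E" "{s, t} \<in> E"
  shows False
proof -
  have "u \<notin> {p, q, r, s, t}"
    using assms(1-5) u_notin_N by auto
  then have "contains_subgraph H43 E"
    using assms by (intro contains_H43I[of u p q r s t]) (auto simp: mem_N_iff insert_commute)
  then show False
    using not_contains_H43 by blast
qed

lemma Out_common_neighbour_edge_False:
  assumes "v \<in> N" "z \<in> N" "p \<in> N" "q \<in> N" and "distinct [v, z, p, q]"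
    and "w \<in> Out" "{v, w} \<in> E" "{z, w} \<in> E" and "{p, q} \<in> E"
  shows False
proof -
  have "u \<notin> {v, z, p, q}" "w \<notin> {u, v, z, p, q}"
    using assms(1-4,6) u_notin_N by auto
  then have "contains_subgraph H43 E"
    using assms by (intro contains_H43I[of u v w z p q]) (auto simp: mem_N_iff insert_commute)
  then show False
    using not_contains_H43 by blast
qed

lemma Out_common_neighbour_path_False:
  assumes "v \<in> N" "z \<in> N" "p \<in> N" "q \<in> N" and "distinct [v, z, p, q]"
    and "w \<in> Out" "{v, w} \<in> E" "{z, w} \<in> E" and "{z, q} \<in> E" "{q, v} \<in> E" "{p, v} \<in> E"
  shows False
proof -
  have "u \<notin> {v, z, p, q}" "w \<notin> {u, v, z, p, q}"
    using assms(1-4,6) u_notin_N by auto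
  then have "contains_subgraph H43 E"
    using assms by (intro contains_H43I[of v w z q u p]) (auto simp: mem_N_iff insert_commute)
  then show False
    using not_contains_H43 by blast
qed

lemma N_degree_le_one_False:
  assumes "\<And>p q r. p \<in> N \<Longrightarrow> q \<in> N \<Longrightarrow> r \<in> N \<Longrightarrow> {p, q} \<in> E \<Longrightarrow> {r, q} \<in> E \<Longrightarrow> p = r"
  shows False
proof -
  define d where "d w = (\<Sum>v\<in>N. adj E v w)" for w
  have d_le: "d w \<le> 1" if "w \<in> N" for w
    unfolding d_def using finite_N by (rule sum_adj_le_one) (use assms that in blast)
  have d_nonneg: "0 \<le> d w" for w
    unfolding d_def by (intro sum_nonneg adj_nonneg)
  have inner: "inner = (\<Sum>w\<in>N. d w * (2 * x w - c))"
    unfolding inner_def d_def by (subst sum.swap) (simp add: sum_distrib_right)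
  have "inner \<le> (\<Sum>w\<in>N. d w * c)"
    unfolding inner using N_subset_V x_le d_nonneg by (intro sum_mono mult_left_mono) auto
  moreover have "inner \<le> (\<Sum>w\<in>N. 2 * x w - d w * c)"
    unfolding inner
  proof (intro sum_mono)
    fix w assume w: "w \<in> N"
    have "d w * (2 * x w) \<le> 1 * (2 * x w)"
      using d_le[OF w] x_nonneg[of w] N_subset_V w by (intro mult_right_mono) auto
    then show "d w * (2 * x w - c) \<le> 2 * x w - d w * c"
      by (simp add: algebra_simps)
  qed
  ultimately have "2 * inner \<le> 2 * (\<rho> * c)"
    by (simp add: rho_mult_c sum_distrib_left sum_subtractf)
  moreover have "0 < (\<rho> - 4) * c"
    using rho_ge c_pos by (intro mult_pos_pos) auto
  ultimately show False
    using inner_ge_rho by (simp add: algebra_simps)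
qed

lemma N_disjoint_edges_no_cross_False:
  assumes N: "a1 \<in> N" "a2 \<in> N" "b1 \<in> N" "b2 \<in> N" and distinct: "distinct [a1, a2, b1, b2]"
    and edges: "{a1, a2} \<in> E" "{b1, b2} \<in> E"
    and no_cross: "\<And>a b. a \<in> {a1, a2} \<Longrightarrow> b \<in> {b1, b2} \<Longrightarrow> {a, b} \<notin> E"
  shows False
proof (rule N_degree_le_one_False)
  fix p q r assume pqr: "p \<in> N" "q \<in> N" "r \<in> N" "{p, q} \<in> E" "{r, q} \<in> E"
  have "p \<noteq> q" "r \<noteq> q"
    using pqr simple_graph_edge_neq[OF simple] by blast+
  show "p = r"
  proof (rule ccontr)
    assume "p \<noteq> r"
    have qp: "{q, p} \<in> E" "{q, r} \<in> E"
      using pqr by (simp_all add: insert_commute)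
    have no_cross': "{b, a} \<notin> E" if "a \<in> {a1, a2}" "b \<in> {b1, b2}" for a b
      using no_cross[OF that] by (simp add: insert_commute)
    consider "q \<in> {a1, a2}" | "q \<in> {b1, b2}" | "q \<notin> {a1, a2, b1, b2}" "p \<in> {a1, a2}"
      | "q \<notin> {a1, a2, b1, b2}" "r \<in> {a1, a2}" | "q \<notin> {a1, a2}" "p \<notin> {a1, a2}" "r \<notin> {a1, a2}"
      by blast
    then show False
    proof cases
      case 1
      then show False
        using N_path_edge_False[of p q r b1 b2] pqr qp N distinct edges no_cross no_cross'
          \<open>p \<noteq> q\<close> \<open>r \<noteq> q\<close> \<open>p \<noteq> r\<close> by auto
    next
      case 2
      then show False
        using N_path_edge_False[of p q r a1 a2] pqr qp N distinct edges no_cross no_cross'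
          \<open>p \<noteq> q\<close> \<open>r \<noteq> q\<close> \<open>p \<noteq> r\<close> by auto
    next
      case 3
      then show False
        using N_path_edge_False[of a2 a1 q b1 b2] N_path_edge_False[of a1 a2 q b1 b2] pqr N distinct edges
        by (auto simp: insert_commute)
    next
      case 4
      then show False
        using N_path_edge_False[of a2 a1 q b1 b2] N_path_edge_False[of a1 a2 q b1 b2] pqr N distinct edges
        by (auto simp: insert_commute)
    next
      case 5
      then show False
        using N_path_edge_False[of p q r a1 a2] pqr qp N distinct edges
          \<open>p \<noteq> q\<close> \<open>r \<noteq> q\<close> \<open>p \<noteq> r\<close> by auto
    qed
  qed
qed

lemma rho_x_le_within:
  assumes "S \<subseteq> N" "v \<in> S" and within: "\<And>w. w \<in> N \<Longrightarrow> {v, w} \<in> E \<Longrightarrow> w \<in> S"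
  shows "\<rho> * x v \<le> real (card S) * c + (\<Sum>w\<in>Out. adj E v w * x w)"
proof -
  have finS: "finite S"
    using assms(1) finite_N by (rule finite_subset)
  have "(\<Sum>w\<in>N. adj E v w * x w) = (\<Sum>w\<in>S - {v}. adj E v w * x w)"
    using assms finite_N simple_graph_edge_neq[OF simple, of v v]
    by (intro sum.mono_neutral_right) (auto simp: adj_def)
  also have "\<dots> \<le> (\<Sum>w\<in>S - {v}. c)"
    using assms(1) N_subset_V by (intro sum_mono adj_mult_x_le) auto
  also have "\<dots> = (real (card S) - 1) * c"
    by (simp only: sum_constant real_card_Diff_singleton[OF finS assms(2)])
  finally show ?thesis
    using eigen_N[of v] assms(1,2) by (auto simp: algebra_simps)
qed

lemma rho_x_Out_le:
  assumes "w \<in> Out" and unique: "\<And>z z'. z \<in> N \<Longrightarrow> z' \<in> N \<Longrightarrow> {z, w} \<in> E \<Longrightarrow> {z', w} \<in> E \<Longrightarrow> z = z'"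
  shows "\<rho> * x w \<le> c + (\<Sum>y\<in>Out. adj E w y) * c"
proof -
  have "(\<Sum>y\<in>N. adj E w y * x y) \<le> (\<Sum>y\<in>N. adj E y w) * c"
    using N_subset_V x_le by (auto simp: sum_distrib_right adj_commute intro!: sum_mono mult_left_mono adj_nonneg)
  also have "\<dots> \<le> 1 * c"
    using finite_N unique c_pos by (intro mult_right_mono sum_adj_le_one) auto
  finally have "(\<Sum>y\<in>N. adj E w y * x y) \<le> c"
    by simp
  moreover have "(\<Sum>y\<in>Out. adj E w y * x y) \<le> (\<Sum>y\<in>Out. adj E w y) * c"
    unfolding sum_distrib_right using x_le by (intro sum_mono mult_left_mono adj_nonneg) auto
  ultimately show ?thesis
    using eigen_Out[OF assms(1)] by linarith
qed

lemma cross_outer_ge: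
  assumes "S \<subseteq> N"
    and sole: "\<And>w v z. w \<in> Out \<Longrightarrow> v \<in> S \<Longrightarrow> z \<in> N \<Longrightarrow> {v, w} \<in> E \<Longrightarrow> {z, w} \<in> E \<Longrightarrow> z = v"
  shows "(\<rho> - 2) * (\<Sum>v\<in>S. \<Sum>w\<in>Out. adj E v w * x w) \<le> 2 * cross + outer * c"
proof -
  define r where "r w = (\<Sum>y\<in>Out. adj E w y)" for w
  have finS: "finite S"
    using assms(1) finite_N by (rule finite_subset)
  have edge_term: "adj E v w * ((\<rho> - 2) * x w) \<le> adj E v w * (2 * (c - x w) + r w * c)"
    if "v \<in> S" "w \<in> Out" for v w
  proof (cases "{v, w} \<in> E")
    case True
    have "\<rho> * x w \<le> c + r w * c"
      unfolding r_def using that(2)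
      by (rule rho_x_Out_le) (metis True assms(1) sole subsetD that(1,2))
    then show ?thesis
      using True c_pos by (simp add: adj_def algebra_simps)
  qed (simp add: adj_def)
  have "(\<rho> - 2) * (\<Sum>v\<in>S. \<Sum>w\<in>Out. adj E v w * x w)
      = (\<Sum>v\<in>S. \<Sum>w\<in>Out. adj E v w * ((\<rho> - 2) * x w))"
    by (simp add: sum_distrib_left algebra_simps)
  also have "\<dots> \<le> (\<Sum>v\<in>S. \<Sum>w\<in>Out. adj E v w * (2 * (c - x w) + r w * c))"
    using edge_term by (intro sum_mono) auto
  also have "\<dots> = (\<Sum>v\<in>S. \<Sum>w\<in>Out. 2 * (adj E v w * (c - x w)) + (adj E v w * r w) * c)"
    by (intro sum.cong refl) (simp add: algebra_simps)
  also have "\<dots> = 2 * (\<Sum>v\<in>S. \<Sum>w\<in>Out. adj E v w * (c - x w)) + (\<Sum>v\<in>S. \<Sum>w\<in>Out. adj E v w * r w) * c"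
    by (simp add: sum.distrib sum_distrib_left sum_distrib_right)
  also have "(\<Sum>v\<in>S. \<Sum>w\<in>Out. adj E v w * r w) = (\<Sum>w\<in>Out. (\<Sum>v\<in>S. adj E v w) * r w)"
    by (subst sum.swap) (simp add: sum_distrib_right)
  finally have main: "(\<rho> - 2) * (\<Sum>v\<in>S. \<Sum>w\<in>Out. adj E v w * x w)
      \<le> 2 * (\<Sum>v\<in>S. \<Sum>w\<in>Out. adj E v w * (c - x w)) + (\<Sum>w\<in>Out. (\<Sum>v\<in>S. adj E v w) * r w) * c" .
  have "(\<Sum>v\<in>S. \<Sum>w\<in>Out. adj E v w * (c - x w)) \<le> cross"
    unfolding cross_def using assms(1) finite_N x_le
    by (intro sum_mono2) (auto intro!: sum_nonneg mult_nonneg_nonneg adj_nonneg)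
  moreover have "(\<Sum>w\<in>Out. (\<Sum>v\<in>S. adj E v w) * r w) \<le> (\<Sum>w\<in>Out. 1 * r w)"
    using finS sole assms(1)
    by (intro sum_mono mult_right_mono sum_adj_le_one) (auto simp: r_def intro!: sum_nonneg adj_nonneg)
  then have "(\<Sum>w\<in>Out. (\<Sum>v\<in>S. adj E v w) * r w) * c \<le> outer * c"
    using c_pos by (intro mult_right_mono) (simp_all add: outer_def r_def)
  ultimately show ?thesis
    using main by linarith
qed

lemma N_four_vertices_False:
  assumes "S \<subseteq> N" "card S = 4"
    and within: "\<And>v w. v \<in> N \<Longrightarrow> w \<in> N \<Longrightarrow> {v, w} \<in> E \<Longrightarrow> v \<in> S"
    and sole: "\<And>w v z. w \<in> Out \<Longrightarrow> v \<in> S \<Longrightarrow> z \<in> N \<Longrightarrow> {v, w} \<in> E \<Longrightarrow> {z, w} \<in> E \<Longrightarrow> z = v"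
    and inner_le: "inner \<le> 6 * (\<Sum>v\<in>S. x v) - 10 * c"
  shows False
proof -
  define X where "X = (\<Sum>v\<in>S. x v)"
  define G where "G = (\<Sum>v\<in>S. \<Sum>w\<in>Out. adj E v w * x w)"
  have "\<rho> * X \<le> (\<Sum>v\<in>S. 4 * c + (\<Sum>w\<in>Out. adj E v w * x w))"
    unfolding X_def sum_distrib_left
  proof (intro sum_mono)
    fix v assume "v \<in> S"
    then show "\<rho> * x v \<le> 4 * c + (\<Sum>w\<in>Out. adj E v w * x w)"
      using rho_x_le_within[OF assms(1)] within assms(1,2) by (fastforce simp: insert_commute)
  qed
  then have rho_X: "\<rho> * X \<le> 16 * c + G"
    using assms(2) by (simp add: G_def sum.distrib)
  have "0 \<le> G"
    unfolding G_def by (intro sum_nonneg mult_nonneg_nonneg adj_nonneg x_nonneg) auto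
  moreover have "13/2 * \<rho> \<le> \<rho> * \<rho>"
    using rho_ge by (intro mult_right_mono) auto
  then have "0 \<le> \<rho> * \<rho> - 2 * \<rho> - 6" "0 < 2 * \<rho> * \<rho> + 6 * \<rho> - 96"
    using rho_ge by linarith+
  ultimately have "0 \<le> (\<rho> * \<rho> - 2 * \<rho> - 6) * G" "0 < (2 * \<rho> * \<rho> + 6 * \<rho> - 96) * c"
    using c_pos by simp_all
  moreover have "(\<rho> - 2) * G \<le> 2 * cross + outer * c"
    unfolding G_def using cross_outer_ge[OF assms(1)] sole by blast
  then have "2 * (\<rho> - 2) * c + (\<rho> - 2) * G \<le> 6 * X - 10 * c"
    using inner_ge inner_le unfolding X_def by linarith
  then have "\<rho> * (2 * (\<rho> - 2) * c + (\<rho> - 2) * G) \<le> \<rho> * (6 * X - 10 * c)"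
    using rho_ge by (intro mult_left_mono) auto
  ultimately show False
    using rho_X by (simp add: algebra_simps)
qed

lemma N_path4_edges_within:
  assumes N: "a \<in> N" "b \<in> N" "d \<in> N" "e \<in> N" and distinct: "distinct [a, b, d, e]"
    and path: "{a, b} \<in> E" "{b, d} \<in> E" "{d, e} \<in> E"
    and st: "s \<in> N" "t \<in> N" "{s, t} \<in> E"
  shows "s \<in> {a, b, d, e}"
proof (rule ccontr)
  assume s: "s \<notin> {a, b, d, e}"
  have "s \<noteq> t"
    using simple_graph_edge_neq[OF simple] st(3) by blast
  have path': "{b, a} \<in> E" "{d, b} \<in> E" "{e, d} \<in> E" and ts: "{t, s} \<in> E"
    using path st(3) by (simp_all add: insert_commute)
  consider "t \<notin> {a, b, d}" | "t \<notin> {b, d, e}" | "t = b" | "t = d"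
    using distinct by auto
  then show False
  proof cases
    case 1
    then show False using N_path_edge_False[of a b d s t] N st s distinct path \<open>s \<noteq> t\<close> by auto
  next
    case 2
    then show False using N_path_edge_False[of b d e s t] N st s distinct path \<open>s \<noteq> t\<close> by auto
  next
    case 3
    then show False using N_path_edge_False[of s b a d e] N st s distinct path path' ts by auto
  next
    case 4
    then show False using N_path_edge_False[of s d e a b] N st s distinct path path' ts by auto
  qed
qed

lemma N_path4_dense_Out_sole:
  assumes N: "a \<in> N" "b \<in> N" "d \<in> N" "e \<in> N" and distinct: "distinct [a, b, d, e]"
    and path: "{a, b} \<in> E" "{b, d} \<in> E" "{d, e} \<in> E"
    and dense: "({a, d} \<in> E \<and> {a, e} \<in> E) \<or> ({a, d} \<in> E \<and> {b, e} \<in> E) \<or> ({a, e} \<in> E \<and> {b, e} \<in> E)"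
    and w: "w \<in> Out" and v: "v \<in> {a, b, d, e}" and z: "z \<in> N" and vw: "{v, w} \<in> E" "{z, w} \<in> E"
  shows "z = v"
proof (rule ccontr)
  assume zv: "z \<noteq> v"
  have vN: "v \<in> N"
    using v N by auto
  have path': "{b, a} \<in> E" "{d, b} \<in> E" "{e, d} \<in> E"
    using path by (simp_all add: insert_commute)
  note c1 = Out_common_neighbour_edge_False[OF vN z _ _ _ w vw]
  note c2 = Out_common_neighbour_path_False[OF vN z _ _ _ w vw]
  from v consider "v = a" | "v = b" | "v = d" | "v = e"
    by blast
  then show False
  proof cases
    case 1
    then show False
      using c1[of b d] c1[of d e] c1[of b e] c2[of e b] dense N distinct path path' zv
      by (cases "z = a"; cases "z = b"; cases "z = d"; cases "z = e"; auto simp: insert_commute)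
  next
    case 2
    then show False
      using c1[of d e] c1[of a d] c1[of a e] c2[of e a] c2[of d a] dense N distinct path path' zv
      by (cases "z = a"; cases "z = b"; cases "z = d"; cases "z = e"; auto simp: insert_commute)
  next
    case 3
    then show False
      using c1[of a b] c1[of a e] c1[of b e] c2[of e b] c2[of e a] dense N distinct path path' zv
      by (cases "z = a"; cases "z = b"; cases "z = d"; cases "z = e"; auto simp: insert_commute)
  next
    case 4
    then show False
      using c1[of a b] c1[of b d] c1[of a d] c2[of d a] dense N distinct path path' zv
      by (cases "z = a"; cases "z = b"; cases "z = d"; cases "z = e"; auto simp: insert_commute)
  qed
qed

lemma N_path4_inner_eq:
  assumes N: "a \<in> N" "b \<in> N" "d \<in> N" "e \<in> N" and distinct: "distinct [a, b, d, e]"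
    and path: "{a, b} \<in> E" "{b, d} \<in> E" "{d, e} \<in> E"
  shows "inner = 2 * (x a + 2 * x b + 2 * x d + x e) - 6 * c + adj E a d * (2 * x a + 2 * x d - 2 * c)
    + adj E a e * (2 * x a + 2 * x e - 2 * c) + adj E b e * (2 * x b + 2 * x e - 2 * c)"
proof -
  have "inner = (\<Sum>v\<in>{a, b, d, e}. \<Sum>w\<in>{a, b, d, e}. adj E v w * (2 * x w - c))"
    using N N_path4_edges_within[OF N distinct path] by (intro inner_eq_restrict) auto
  moreover have "adj E a b = 1" "adj E b a = 1" "adj E b d = 1" "adj E d b = 1" "adj E d e = 1" "adj E e d = 1"
    using path by (simp_all add: adj_def insert_commute)
  ultimately show ?thesis
    using distinct
    by (simp add: adj_self[OF simple] adj_commute[of E d a] adj_commute[of E e a] adj_commute[of E e b]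
        algebra_simps)
qed

lemma N_path4_False:
  assumes N: "a \<in> N" "b \<in> N" "d \<in> N" "e \<in> N" and distinct: "distinct [a, b, d, e]"
    and path: "{a, b} \<in> E" "{b, d} \<in> E" "{d, e} \<in> E"
  shows False
proof -
  define S where "S = {a, b, d, e}"
  have x_bounds: "0 \<le> x a" "x a \<le> c" "0 \<le> x b" "x b \<le> c" "0 \<le> x d" "x d \<le> c" "0 \<le> x e" "x e \<le> c"
    using N N_subset_V x_nonneg x_le by auto
  note inner = N_path4_inner_eq[OF N distinct path]
  txt \<open>With at most one chord, \<open>inner \<le> 8c\<close>.  With two chords, \<open>H(4,3)\<close>-freeness leaves each
    vertex of \<open>Out\<close> at most one neighbour in \<open>N\<close> as soon as it has one in \<open>S\<close>.\<close>
  show False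
  proof (cases "({a, d} \<in> E \<and> {a, e} \<in> E) \<or> ({a, d} \<in> E \<and> {b, e} \<in> E) \<or> ({a, e} \<in> E \<and> {b, e} \<in> E)")
    case False
    then have "inner \<le> 8 * c"
      unfolding inner using x_bounds by (auto simp: adj_def)
    then show False
      using nine_c_le_inner c_pos by linarith
  next
    case dense: True
    have "S \<subseteq> N" "card S = 4"
      using N distinct by (simp_all add: S_def)
    moreover have "v \<in> S" if "v \<in> N" "w \<in> N" "{v, w} \<in> E" for v w
      using N_path4_edges_within[OF N distinct path that] by (simp add: S_def)
    moreover have "z = v" if "w \<in> Out" "v \<in> S" "z \<in> N" "{v, w} \<in> E" "{z, w} \<in> E" for w v z
      using N_path4_dense_Out_sole[OF N distinct path dense] that unfolding S_def by blast
    moreover have "inner \<le> 6 * (\<Sum>v\<in>S. x v) - 10 * c"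
      unfolding inner S_def using distinct x_bounds dense by (auto simp: adj_def)
    ultimately show False
      by (rule N_four_vertices_False)
  qed
qed

lemma N_disjoint_edges_False:
  assumes N: "a1 \<in> N" "a2 \<in> N" "b1 \<in> N" "b2 \<in> N" and distinct: "distinct [a1, a2, b1, b2]"
    and edges: "{a1, a2} \<in> E" "{b1, b2} \<in> E"
  shows False
proof (rule N_disjoint_edges_no_cross_False[OF assms])
  fix a b assume "a \<in> {a1, a2}" "b \<in> {b1, b2}"
  then show "{a, b} \<notin> E"
    using N_path4_False[of a2 a1 b1 b2] N_path4_False[of a1 a2 b1 b2]
      N_path4_False[of a2 a1 b2 b1] N_path4_False[of a1 a2 b2 b1] N distinct edges
    by (auto simp: insert_commute)
qed

lemma N_edges_common_vertex: "\<exists>z. \<forall>e\<in>induced_edges E N. z \<in> e"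
proof -
  let ?F = "induced_edges E N"
  have "simple_graph ?F"
    using simple by (auto simp: simple_graph_def induced_edges_def)
  moreover have "e \<inter> e' \<noteq> {}" if "e \<in> ?F" "e' \<in> ?F" for e e'
  proof
    assume disjoint: "e \<inter> e' = {}"
    have "e \<in> E" "e' \<in> E"
      using that by (simp_all add: induced_edges_def)
    then obtain a1 a2 b1 b2 where "e = {a1, a2}" "a1 \<noteq> a2" "e' = {b1, b2}" "b1 \<noteq> b2"
      by (metis simple simple_graph_edgeE)
    then show False
      using N_disjoint_edges_False[of a1 a2 b1 b2] that disjoint by (auto simp: induced_edges_def)
  qed
  moreover have "\<not> card (verts ?F) \<le> 3"
  proof
    assume "card (verts ?F) \<le> 3"
    moreover have "verts ?F \<subseteq> N"
      by (auto simp: verts_def induced_edges_def)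
    moreover have "v \<in> verts ?F" if "v \<in> N" "w \<in> N" "{v, w} \<in> E" for v w
      using that by (auto simp: verts_def induced_edges_def)
    ultimately show False
      using N_edges_within_small_False by blast
  qed
  ultimately show ?thesis
    using intersecting_edges_star_or_small by blast
qed

lemma active_neighbours_star:
  defines "A \<equiv> {v \<in> N. \<exists>w\<in>N. {v, w} \<in> E}"
  shows "\<exists>t\<ge>1. graph_iso A (induced_edges E A) (star_verts t) (star_edges t)"
proof -
  obtain z where z: "\<And>e. e \<in> E \<Longrightarrow> e \<subseteq> N \<Longrightarrow> z \<in> e"
    using N_edges_common_vertex by (auto simp: induced_edges_def)
  obtain a b where ab: "a \<in> N" "b \<in> N" "{a, b} \<in> E"
    using N_has_edge by blast
  have "a \<noteq> b" "z \<in> {a, b}"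
    using ab z[of "{a, b}"] simple_graph_edge_neq[OF simple, of a b] by auto
  then obtain y where y: "y \<in> {a, b}" "y \<noteq> z"
    by blast
  have A_N: "A \<subseteq> N"
    by (auto simp: A_def)
  have spokes: "{z, v} \<in> E" if v: "v \<in> A - {z}" for v
  proof -
    obtain w where "v \<in> N" "w \<in> N" "{v, w} \<in> E" "v \<noteq> z"
      using v by (auto simp: A_def)
    then show ?thesis
      using z[of "{v, w}"] by (auto simp: insert_commute)
  qed
  have "y \<in> A - {z}" "z \<in> A"
    using ab y \<open>z \<in> {a, b}\<close> by (auto simp: A_def insert_commute)
  moreover have "finite A"
    using A_N finite_N by (rule finite_subset)
  ultimately have "1 \<le> card (A - {z})"
    by (metis Suc_leI card_gt_0_iff empty_iff finite_Diff One_nat_def)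
  moreover have "graph_iso A (induced_edges E A) (star_verts (card (A - {z}))) (star_edges (card (A - {z})))"
    using simple \<open>finite A\<close> \<open>z \<in> A\<close> by (rule graph_iso_star) (use z A_N spokes in blast)+
  ultimately show ?thesis
    by blast
qed

end

theorem mainTheorem7:
  fixes E :: "'a set set" and m :: nat and x :: "'a \<Rightarrow> real" and u :: 'a
  assumes "m \<ge> 38" and "even m"
    and "simple_graph E" and "card E = m" and "H43_free E"
    and "\<forall>E' :: nat set set. simple_graph E' \<and> card E' = m \<and> H43_free E'
           \<longrightarrow> spectral_radius E' \<le> spectral_radius E"
    and "perron_vector E x"
    and "u \<in> verts E" and "\<forall>v\<in>verts E. x v \<le> x u"
  shows "\<exists>t\<ge>1. graph_iso
            {v \<in> neighbours E u. \<exists>w\<in>neighbours E u. {v, w} \<in> E}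
            (induced_edges E {v \<in> neighbours E u. \<exists>w\<in>neighbours E u. {v, w} \<in> E})
            (star_verts t) (star_edges t)"
proof -
  define k where "k = (m - 2) div 2"
  have m: "m = 2 * k + 2" and k: "18 \<le> k"
    using assms(1,2) by (auto simp: k_def elim!: evenE)
  let ?\<rho> = "spectral_radius E"
  have "spectral_radius (book_plus_edge k) \<le> ?\<rho>"
    using assms(6) simple_graph_book_plus_edge card_book_plus_edge H43_free_book_plus_edge m by simp
  then have "book_root k \<le> ?\<rho>"
    using book_root_le_spectral_radius[of k] by linarith
  then have "13/2 \<le> ?\<rho>" "real (card E) - 2 \<le> ?\<rho>\<^sup>2 - ?\<rho>"
    using book_root_ge_thirteen_halves[OF k] book_root_le_imp_sq_minus_ge[of k ?\<rho>] assms(4) m by auto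
  moreover have "is_adj_eigenvector E ?\<rho> x" "\<forall>v\<in>verts E. 0 < x v"
    using assms(7) by (simp_all add: perron_vector_def)
  ultimately interpret H43_free_large_rho E x u ?\<rho>
    using assms(3,5,8,9) by unfold_locales (auto simp: is_adj_eigenvector_def)
  show ?thesis
    by (rule active_neighbours_star)
qed

end
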